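(* Let $s,t,p\ge 1$, $A,B\in GL(n)$ and $Q\in\mathcal{P}(n)$ with $\lambda_1(Q)\le 1$. If the equation $X^s+A^*X^{-t}A+B^*X^{-p}B=Q$ has a Hermitian positive definite solution, then $$\rho^2(A)<\frac{q^q}{(q+1)^{q+1}}\quad\text{and}\quad \rho^2(B)<\frac{q^q}{(q+1)^{q+1}},\qquad\text{where } q=\min\{t/s,\,p/s\}.$$
   Context: $GL(n)$: $n\times n$ complex nonsingular matrices; $\mathcal{P}(n)$: $n\times n$ Hermitian positive definite matrices. For a Hermitian matrix $M$, $\lambda_1(M)$ is its largest and $\lambda_n(M)$ its smallest eigenvalue. $\rho(M)$ is the spectral radius. Real powers of positive definite matrices are defined by functional calculus. *)

theory Defs
  imports "Jordan_Normal_Form.Spectral_Radius" "Jordan_Normal_Form.Schur_Decomposition"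
begin

definition hermitian_mat :: "complex mat \<Rightarrow> bool" where
  "hermitian_mat A \<longleftrightarrow> mat_adjoint A = A"

definition pd_mat :: "nat \<Rightarrow> complex mat \<Rightarrow> bool" where
  "pd_mat n A \<longleftrightarrow> A \<in> carrier_mat n n \<and> hermitian_mat A \<and>
     (\<forall>v \<in> carrier_vec n. v \<noteq> 0\<^sub>v n \<longrightarrow> Re (conjugate v \<bullet> (A *\<^sub>v v)) > 0)"

definition gl_mat :: "nat \<Rightarrow> complex mat \<Rightarrow> bool" where
  "gl_mat n A \<longleftrightarrow> A \<in> carrier_mat n n \<and> invertible_mat A"

definition unitary_mat :: "nat \<Rightarrow> complex mat \<Rightarrow> bool" where
  "unitary_mat n U \<longleftrightarrow> U \<in> carrier_mat n n \<and> mat_adjoint U * U = 1\<^sub>m n"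

definition mat_powr :: "nat \<Rightarrow> complex mat \<Rightarrow> real \<Rightarrow> complex mat" where
  "mat_powr n X r = (SOME Y. \<exists>U d. unitary_mat n U \<and> (\<forall>i<n. d i > 0) \<and>
      X = U * mat_diag n (\<lambda>i. complex_of_real (d i)) * mat_adjoint U \<and>
      Y = U * mat_diag n (\<lambda>i. complex_of_real (d i powr r)) * mat_adjoint U)"

definition lambda_max :: "complex mat \<Rightarrow> real" where
  "lambda_max M = Max (Re ` spectrum M)"

end

theory Submission
  imports Defs
begin

text \<open>Let x be an eigenvector of A for an eigenvalue \<lambda> of maximal modulus, and let y be
  the coordinates of x in an orthonormal eigenbasis of X, with eigenvalues d_k > 0. In the
  quadratic form of the equation at x the B-term is positive and \<lambda>_1(Q) \<le> 1, so
  \<Sum> d_k^s |y_k|^2 + |\<lambda>|^2 \<Sum> d_k^(-t) |y_k|^2 < \<Sum> |y_k|^2. With the weights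
  w_k = |y_k|^2 / \<Sum> |y_j|^2 and a = \<Sum> w_k d_k^s, Jensen's inequality for the convex function
  u \<mapsto> u^(-t/s) turns this into a + |\<lambda>|^2 a^(-t/s) < 1. Hence 0 < a < 1 and
  |\<lambda>|^2 < (1 - a) a^(t/s) \<le> (1 - a) a^q \<le> q^q / (q + 1)^(q + 1), the maximum of (1 - a) a^q
  on ]0, 1[. Exchanging the two terms of the equation gives the bound for B.\<close>

lemma mat_adjoint_eq_mat:
  "mat_adjoint (A :: complex mat) = mat (dim_col A) (dim_row A) (\<lambda>(i,j). cnj (A $$ (j,i)))"
  unfolding mat_adjoint_def by (rule eq_matI) (auto simp: mat_of_rows_def)

lemma carrier_mat_adjoint [simp]:
  "(A :: complex mat) \<in> carrier_mat n m \<Longrightarrow> mat_adjoint A \<in> carrier_mat m n"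
  by (auto simp: mat_adjoint_eq_mat)

lemma dim_mat_adjoint [simp]:
  "dim_row (mat_adjoint (A :: complex mat)) = dim_col A"
  "dim_col (mat_adjoint (A :: complex mat)) = dim_row A"
  by (auto simp: mat_adjoint_eq_mat)

lemma index_mat_adjoint [simp]:
  "i < dim_col A \<Longrightarrow> j < dim_row A \<Longrightarrow> mat_adjoint (A :: complex mat) $$ (i,j) = cnj (A $$ (j,i))"
  by (auto simp: mat_adjoint_eq_mat)

lemma mat_adjoint_mat_adjoint [simp]: "mat_adjoint (mat_adjoint (A :: complex mat)) = A"
  by (rule eq_matI) auto

lemma mat_adjoint_mult:
  assumes "(A :: complex mat) \<in> carrier_mat n m" "B \<in> carrier_mat m k"
  shows "mat_adjoint (A * B) = mat_adjoint B * mat_adjoint A"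
  using assms by (intro eq_matI) (auto simp: scalar_prod_def mult.commute)

lemma mat_adjoint_four_block_mat:
  assumes "(A :: complex mat) \<in> carrier_mat nr1 nc1" "B \<in> carrier_mat nr1 nc2"
    and "C \<in> carrier_mat nr2 nc1" "D \<in> carrier_mat nr2 nc2"
  shows "mat_adjoint (four_block_mat A B C D)
    = four_block_mat (mat_adjoint A) (mat_adjoint C) (mat_adjoint B) (mat_adjoint D)"
  using assms by (intro eq_matI) auto

lemma sprod_mat_adjoint:
  assumes "(A :: complex mat) \<in> carrier_mat n m" "x \<in> carrier_vec m" "y \<in> carrier_vec n"
  shows "conjugate x \<bullet> (mat_adjoint A *\<^sub>v y) = conjugate (A *\<^sub>v x) \<bullet> y"
proof -
  have "conjugate x \<bullet> (mat_adjoint A *\<^sub>v y) = (\<Sum>i<m. cnj (x $ i) * (\<Sum>j<n. cnj (A $$ (j,i)) * y $ j))"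
    using assms by (auto simp: scalar_prod_def row_def atLeast0LessThan)
  also have "\<dots> = (\<Sum>i<m. \<Sum>j<n. cnj (x $ i) * cnj (A $$ (j,i)) * y $ j)"
    by (simp add: sum_distrib_left mult.assoc)
  also have "\<dots> = (\<Sum>j<n. \<Sum>i<m. cnj (x $ i) * cnj (A $$ (j,i)) * y $ j)"
    by (rule sum.swap)
  also have "\<dots> = (\<Sum>j<n. cnj (\<Sum>i<m. A $$ (j,i) * x $ i) * y $ j)"
    by (simp add: sum_distrib_left sum_distrib_right mult_ac)
  also have "\<dots> = conjugate (A *\<^sub>v x) \<bullet> y"
    using assms by (auto simp: scalar_prod_def row_def atLeast0LessThan)
  finally show ?thesis .
qed

lemma index_mat_adjoint_mult_mult:
  assumes W: "(W :: complex mat) \<in> carrier_mat n m" and M: "M \<in> carrier_mat n n"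
    and "i < m" "j < m"
  shows "(mat_adjoint W * M * W) $$ (i,j) = conjugate (col W i) \<bullet> (M *\<^sub>v col W j)"
proof -
  have "(mat_adjoint W * M * W) $$ (i,j) = (mat_adjoint W * (M * W)) $$ (i,j)"
    using assms by (simp add: assoc_mult_mat[of _ m n _ n _ m])
  also have "\<dots> = row (mat_adjoint W) i \<bullet> col (M * W) j"
    using assms by (intro index_mult_mat) auto
  also have "row (mat_adjoint W) i = conjugate (col W i)"
    using assms by (auto intro!: eq_vecI)
  also have "col (M * W) j = M *\<^sub>v col W j"
    by (rule col_mult2[OF M W \<open>j < m\<close>])
  finally show ?thesis .
qed

lemma unitary_matD:
  assumes "unitary_mat n U"
  shows "U \<in> carrier_mat n n" "mat_adjoint U * U = 1\<^sub>m n" "U * mat_adjoint U = 1\<^sub>m n"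
  using assms unfolding unitary_mat_def by (auto intro: mat_mult_left_right_inverse)

lemma unitary_mat_mult:
  assumes "unitary_mat n U" "unitary_mat n V"
  shows "unitary_mat n (U * V)"
proof -
  note U = unitary_matD[OF assms(1)] and V = unitary_matD[OF assms(2)]
  have "mat_adjoint (U * V) * (U * V) = mat_adjoint V * ((mat_adjoint U * U) * V)"
    using U(1) V(1) by (simp add: mat_adjoint_mult[of _ n n _ n] assoc_mult_mat[of _ n n _ n _ n])
  then show ?thesis
    using U V unfolding unitary_mat_def by simp
qed

lemma unitary_mat_four_block_mat:
  assumes "unitary_mat m U"
  shows "unitary_mat (Suc m) (four_block_mat (1\<^sub>m 1) (0\<^sub>m 1 m) (0\<^sub>m m 1) U)"
proof -
  note U = unitary_matD[OF assms]
  have blocks: "1\<^sub>m 1 \<in> carrier_mat 1 1" "0\<^sub>m 1 m \<in> carrier_mat 1 m" "0\<^sub>m m 1 \<in> carrier_mat m 1"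
    "(0\<^sub>m 1 m :: complex mat) \<in> carrier_mat 1 m" "(0\<^sub>m m 1 :: complex mat) \<in> carrier_mat m 1"
    "mat_adjoint U \<in> carrier_mat m m"
    using U by auto
  have "mat_adjoint (four_block_mat (1\<^sub>m 1) (0\<^sub>m 1 m) (0\<^sub>m m 1) U)
      = four_block_mat (1\<^sub>m 1) (0\<^sub>m 1 m) (0\<^sub>m m 1) (mat_adjoint U)"
    using U(1) by (subst mat_adjoint_four_block_mat[OF blocks(1-3) U(1)]) (auto intro!: eq_matI)
  moreover have "four_block_mat (1\<^sub>m 1) (0\<^sub>m 1 m) (0\<^sub>m m 1) (mat_adjoint U)
      * four_block_mat (1\<^sub>m 1) (0\<^sub>m 1 m) (0\<^sub>m m 1) U = 1\<^sub>m (1 + m)"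
    using U by (subst mult_four_block_mat[OF blocks(1,4,5,6) blocks(1-3) U(1)]) simp
  ultimately show ?thesis
    using four_block_carrier_mat[OF blocks(1) U(1)] unfolding unitary_mat_def by simp
qed

definition vec_normalize :: "complex vec \<Rightarrow> complex vec" where
  "vec_normalize w = (1 / complex_of_real (sqrt (Re (w \<bullet>c w)))) \<cdot>\<^sub>v w"

lemma carrier_vec_normalize [simp]: "w \<in> carrier_vec n \<Longrightarrow> vec_normalize w \<in> carrier_vec n"
  by (simp add: vec_normalize_def)

lemma dim_vec_normalize [simp]: "dim_vec (vec_normalize w) = dim_vec w"
  by (simp add: vec_normalize_def)

lemma sprod_vec_normalize:
  assumes "w \<in> carrier_vec n" "w' \<in> carrier_vec n"
  shows "vec_normalize w \<bullet>c vec_normalize w'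
    = complex_of_real (1 / sqrt (Re (w \<bullet>c w)) * (1 / sqrt (Re (w' \<bullet>c w')))) * (w \<bullet>c w')"
  using assms unfolding vec_normalize_def by (simp add: conjugate_smult_vec)

lemma sprod_vec_normalize_self:
  assumes "w \<in> carrier_vec n" "w \<noteq> 0\<^sub>v n"
  shows "vec_normalize w \<bullet>c vec_normalize w = 1"
proof -
  have "w \<bullet>c w > 0"
    using assms by simp
  then obtain r where "r > 0" "w \<bullet>c w = complex_of_real r"
    by (auto simp: less_complex_def complex_eq_iff intro!: exI[of _ "Re (w \<bullet>c w)"])
  then show ?thesis
    using sprod_vec_normalize[OF assms(1) assms(1)] by (simp flip: of_real_mult)
qed

lemma vec_normalize_unit: "w \<bullet>c w = 1 \<Longrightarrow> vec_normalize w = w"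
  unfolding vec_normalize_def by simp

lemma unitary_mat_extend:
  assumes u: "u \<in> carrier_vec n" and uu: "u \<bullet>c u = 1"
  shows "\<exists>W. unitary_mat n W \<and> col W 0 = u"
proof -
  interpret cof_vec_space n "TYPE(complex)" .
  have u0: "u \<noteq> 0\<^sub>v n"
    using uu u by auto
  then have n: "n > 0"
    using u by (cases n) auto
  define b where "b = basis_completion u"
  from basis_completion[OF u u0, folded b_def]
  have b: "distinct b" "\<not> lin_dep (set b)" "set b \<subseteq> carrier_vec n" "hd b = u" "length b = n"
    by auto
  with n obtain vs where b_Cons: "b = u # vs"
    by (cases b) auto
  define ws where "ws = gram_schmidt n b"
  from gram_schmidt_result[OF b(3,1,2) refl, folded ws_def]
  have ws: "set ws \<subseteq> carrier_vec n" "corthogonal ws" "length ws = n"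
    by (auto simp: b(5))
  have ws_hd: "ws ! 0 = u"
    using gram_schmidt_hd[OF u, of vs, folded b_Cons ws_def] n ws(3) by (cases ws) auto
  have ws_carrier: "i < n \<Longrightarrow> ws ! i \<in> carrier_vec n" for i
    using ws by auto
  define us where "us = map vec_normalize ws"
  define W where "W = mat_of_cols n us"
  have W: "W \<in> carrier_mat n n"
    unfolding W_def us_def using ws by auto
  have orthonormal: "us ! j \<bullet>c us ! i = (if i = j then 1 else 0)" if "i < n" "j < n" for i j
  proof (cases "i = j")
    case True
    have "ws ! i \<noteq> 0\<^sub>v n"
      using corthogonalD[OF ws(2), of i i] that ws(3) ws_carrier[OF that(1)] by auto
    then show ?thesis
      unfolding us_def using True that ws sprod_vec_normalize_self[OF ws_carrier] by auto
  next
    case False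
    then show ?thesis
      unfolding us_def using that ws sprod_vec_normalize[OF ws_carrier ws_carrier]
        corthogonalD[OF ws(2), of j i] by auto
  qed
  have "mat_adjoint W * W = 1\<^sub>m n"
  proof (rule eq_matI)
    fix i j assume "i < dim_row (1\<^sub>m n :: complex mat)" "j < dim_col (1\<^sub>m n :: complex mat)"
    moreover have "dim_vec (ws ! k) = n" if "k < n" for k
      using ws_carrier[OF that] by simp
    ultimately show "(mat_adjoint W * W) $$ (i,j) = 1\<^sub>m n $$ (i,j)"
      using W ws orthonormal unfolding W_def us_def
      by (auto simp: scalar_prod_def mat_of_cols_index mult.commute intro!: sum.cong)
  qed (use W in auto)
  moreover have "col W 0 = u"
    unfolding W_def us_def using n ws ws_hd vec_normalize_unit[OF uu]
    by (subst col_mat_of_cols) auto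
  ultimately show ?thesis
    using W unfolding unitary_mat_def by blast
qed

lemma unitary_mat_conj_cancel:
  assumes "unitary_mat n W" "M \<in> carrier_mat n n"
  shows "W * (mat_adjoint W * M * W) * mat_adjoint W = M"
proof -
  note W = unitary_matD[OF assms(1)]
  have "W * (mat_adjoint W * M * W) * mat_adjoint W = (W * mat_adjoint W) * M * (W * mat_adjoint W)"
    using W(1) assms(2) by (simp add: assoc_mult_mat[of _ n n _ n _ n] mult_carrier_mat[of _ n n _ n])
  then show ?thesis
    using W assms(2) by simp
qed

lemma hermitian_mat_adjoint_mult_mult:
  assumes "hermitian_mat A" "A \<in> carrier_mat n n" "W \<in> carrier_mat n m"
  shows "hermitian_mat (mat_adjoint W * A * W)"
proof -
  have "mat_adjoint (mat_adjoint W * A * W) = mat_adjoint W * mat_adjoint (mat_adjoint W * A)"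
    using assms by (intro mat_adjoint_mult[of _ m n _ m]) auto
  also have "mat_adjoint (mat_adjoint W * A) = mat_adjoint A * W"
    using assms by (subst mat_adjoint_mult[of _ m n _ n]) auto
  also have "mat_adjoint W * (mat_adjoint A * W) = mat_adjoint W * A * W"
    using assms unfolding hermitian_mat_def by (simp add: assoc_mult_mat[of _ m n _ n _ m])
  finally show ?thesis
    unfolding hermitian_mat_def .
qed

lemma hermitian_mat_deflate:
  assumes A: "A \<in> carrier_mat (Suc m) (Suc m)" "hermitian_mat A"
    and W: "unitary_mat (Suc m) W" and eig: "A *\<^sub>v col W 0 = e \<cdot>\<^sub>v col W 0"
  shows "\<exists>r A3. A3 \<in> carrier_mat m m \<and> hermitian_mat A3 \<and>
    mat_adjoint W * A * W = four_block_mat (mat 1 1 (\<lambda>_. complex_of_real r)) (0\<^sub>m 1 m) (0\<^sub>m m 1) A3"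
proof -
  define A' where "A' = mat_adjoint W * A * W"
  note W = unitary_matD[OF W]
  have A': "A' \<in> carrier_mat (Suc m) (Suc m)" "hermitian_mat A'"
    unfolding A'_def using A W(1) hermitian_mat_adjoint_mult_mult by auto
  have A'_cnj: "A' $$ (i,j) = cnj (A' $$ (j,i))" if "i < Suc m" "j < Suc m" for i j
    using arg_cong[OF A'(2)[unfolded hermitian_mat_def], of "\<lambda>M. M $$ (i,j)"] A'(1) that by simp
  have orthonormal: "conjugate (col W i) \<bullet> col W j = (if i = j then 1 else 0)"
    if "i < Suc m" "j < Suc m" for i j
    using index_mat_adjoint_mult_mult[OF W(1) one_carrier_mat that] W that by simp
  have col0: "A' $$ (i,0) = (if i = 0 then e else 0)" if "i < Suc m" for i
    unfolding A'_def using index_mat_adjoint_mult_mult[OF W(1) A(1) that, of 0] orthonormal[OF that, of 0] that W(1)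
    by (simp add: eig scalar_prod_smult_distrib[of _ "Suc m"])
  have e_real: "complex_of_real (Re e) = e"
    using A'_cnj[of 0 0] col0[of 0] by (simp add: complex_eq_iff)
  define A3 where "A3 = mat m m (\<lambda>(i,j). A' $$ (Suc i, Suc j))"
  have "hermitian_mat A3"
    unfolding hermitian_mat_def A3_def by (rule eq_matI) (auto simp: A'_cnj[symmetric])
  moreover have "A' = four_block_mat (mat 1 1 (\<lambda>_. complex_of_real (Re e))) (0\<^sub>m 1 m) (0\<^sub>m m 1) A3"
    (is "_ = ?B")
  proof (rule eq_matI)
    fix i j assume "i < dim_row ?B" "j < dim_col ?B"
    then show "A' $$ (i,j) = ?B $$ (i,j)"
      using col0 A'_cnj[of 0 j] col0[of j] e_real unfolding A3_def by (cases i; cases j) auto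
  qed (use A'(1) in \<open>auto simp: A3_def\<close>)
  ultimately show ?thesis
    unfolding A'_def by (intro exI[of _ "Re e"] exI[of _ A3]) (auto simp: A3_def)
qed

lemma mat_diag_Suc_four_block_mat:
  "mat_diag (Suc m) f
    = four_block_mat (mat 1 1 (\<lambda>_. f 0)) (0\<^sub>m 1 m) (0\<^sub>m m 1) (mat_diag m (\<lambda>i. f (Suc i)))"
  by (rule eq_matI) (auto simp: mat_diag_def)

lemma four_block_mat_diag_conj:
  assumes U: "(U :: complex mat) \<in> carrier_mat m m"
  defines "B \<equiv> four_block_mat (1\<^sub>m 1) (0\<^sub>m 1 m) (0\<^sub>m m 1) U"
  shows "B * mat_diag (Suc m) f * mat_adjoint B
    = four_block_mat (mat 1 1 (\<lambda>_. f 0)) (0\<^sub>m 1 m) (0\<^sub>m m 1)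
        (U * mat_diag m (\<lambda>i. f (Suc i)) * mat_adjoint U)"
proof -
  have c: "1\<^sub>m 1 \<in> carrier_mat 1 1" "mat 1 1 (\<lambda>_. f 0) \<in> carrier_mat 1 1"
    "0\<^sub>m 1 m \<in> carrier_mat 1 m" "0\<^sub>m m 1 \<in> carrier_mat m 1"
    "mat_diag m (\<lambda>i. f (Suc i)) \<in> carrier_mat m m" "mat_adjoint U \<in> carrier_mat m m"
    using U by auto
  have "B * mat_diag (Suc m) f
    = four_block_mat (mat 1 1 (\<lambda>_. f 0)) (0\<^sub>m 1 m) (0\<^sub>m m 1) (U * mat_diag m (\<lambda>i. f (Suc i)))"
    unfolding B_def mat_diag_Suc_four_block_mat
    using U by (subst mult_four_block_mat[OF c(1,3,4) U c(2-5)]) (simp add: left_mult_zero_mat[of _ m m])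
  moreover have "mat_adjoint B = four_block_mat (1\<^sub>m 1) (0\<^sub>m 1 m) (0\<^sub>m m 1) (mat_adjoint U)"
    unfolding B_def using U by (subst mat_adjoint_four_block_mat[OF c(1,3,4) U]) (auto intro!: eq_matI)
  ultimately show ?thesis
    using U c by (simp only:) (subst mult_four_block_mat[OF c(2-4) mult_carrier_mat[OF U c(5)] c(1,3,4,6)],
      simp add: left_mult_zero_mat[of _ m m] right_mult_zero_mat[of _ m m] left_add_zero_mat[of _ m m]
        mult_carrier_mat[of _ m m _ m])
qed

theorem hermitian_mat_unitary_diagonalization:
  assumes "(A :: complex mat) \<in> carrier_mat n n" "hermitian_mat A"
  shows "\<exists>U d. unitary_mat n U \<and> A = U * mat_diag n (\<lambda>i. complex_of_real (d i)) * mat_adjoint U"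
  using assms
proof (induction n arbitrary: A)
  case 0
  then show ?case
    by (intro exI[of _ "1\<^sub>m 0"] exI[of _ "\<lambda>_. 0"]) (auto simp: unitary_mat_def intro!: eq_matI)
next
  case (Suc m A)
  obtain e where "e \<in> spectrum A"
    using spectrum_non_empty[OF Suc.prems(1)] by auto
  then obtain v where v: "v \<in> carrier_vec (Suc m)" "v \<noteq> 0\<^sub>v (Suc m)" "A *\<^sub>v v = e \<cdot>\<^sub>v v"
    unfolding spectrum_def eigenvalue_def eigenvector_def using Suc.prems(1) by auto
  define u where "u = vec_normalize v"
  have "u \<in> carrier_vec (Suc m)" "u \<bullet>c u = 1"
    using v by (auto simp: u_def sprod_vec_normalize_self)
  then obtain W where W: "unitary_mat (Suc m) W" "col W 0 = u"
    using unitary_mat_extend by blast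
  have "A *\<^sub>v col W 0 = e \<cdot>\<^sub>v col W 0"
    unfolding W(2) u_def vec_normalize_def using v Suc.prems(1)
    by (simp add: mult_mat_vec smult_smult_assoc mult.commute)
  then obtain r A3 where A3: "A3 \<in> carrier_mat m m" "hermitian_mat A3"
    and deflated: "mat_adjoint W * A * W
      = four_block_mat (mat 1 1 (\<lambda>_. complex_of_real r)) (0\<^sub>m 1 m) (0\<^sub>m m 1) A3"
    using hermitian_mat_deflate[OF Suc.prems W(1)] by blast
  obtain U3 d3 where U3: "unitary_mat m U3"
    and A3_eq: "A3 = U3 * mat_diag m (\<lambda>i. complex_of_real (d3 i)) * mat_adjoint U3"
    using Suc.IH[OF A3] by blast
  define B where "B = four_block_mat (1\<^sub>m 1) (0\<^sub>m 1 m) (0\<^sub>m m 1) U3"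
  define D where "D = mat_diag (Suc m) (\<lambda>i. complex_of_real (if i = 0 then r else d3 (i - 1)))"
  have B: "unitary_mat (Suc m) B"
    unfolding B_def by (rule unitary_mat_four_block_mat[OF U3])
  have "mat_adjoint W * A * W = B * D * mat_adjoint B"
    unfolding deflated A3_eq B_def D_def four_block_mat_diag_conj[OF unitary_matD(1)[OF U3]] by simp
  then have "A = W * (B * D * mat_adjoint B) * mat_adjoint W"
    using unitary_mat_conj_cancel[OF W(1) Suc.prems(1)] by simp
  also have "\<dots> = (W * B) * D * mat_adjoint (W * B)"
    using unitary_matD(1)[OF W(1)] unitary_matD(1)[OF B]
    by (simp add: D_def mat_adjoint_mult[of _ "Suc m" "Suc m" _ "Suc m"] assoc_mult_mat[of _ "Suc m" "Suc m" _ "Suc m" _ "Suc m"]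
        mult_carrier_mat[of _ "Suc m" "Suc m" _ "Suc m"])
  finally show ?case
    using unitary_mat_mult[OF W(1) B] unfolding D_def
    by (intro exI[of _ "W * B"] exI[of _ "\<lambda>i. if i = 0 then r else d3 (i - 1)"]) simp
qed

lemma mat_diag_commute_fun:
  fixes W :: "'a :: idom mat"
  assumes W: "W \<in> carrier_mat n n" and comm: "W * mat_diag n f1 = mat_diag n f2 * W"
  shows "W * mat_diag n (\<lambda>i. g (f1 i)) = mat_diag n (\<lambda>i. g (f2 i)) * W"
proof (rule eq_matI)
  fix i j assume "i < dim_row (mat_diag n (\<lambda>i. g (f2 i)) * W)" "j < dim_col (mat_diag n (\<lambda>i. g (f2 i)) * W)"
  then have ij: "i < n" "j < n"
    using W by (auto simp: mat_diag_def)
  have "W $$ (i,j) * f1 j = f2 i * W $$ (i,j)"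
    using arg_cong[OF comm, of "\<lambda>M. M $$ (i,j)"] ij W
    by (simp add: mat_diag_mult_right[OF W] mat_diag_mult_left[OF W])
  then have "W $$ (i,j) * g (f1 j) = g (f2 i) * W $$ (i,j)"
    by (cases "W $$ (i,j) = 0") (auto simp: mult.commute)
  then show "(W * mat_diag n (\<lambda>i. g (f1 i))) $$ (i,j) = (mat_diag n (\<lambda>i. g (f2 i)) * W) $$ (i,j)"
    using ij W by (simp add: mat_diag_mult_right[OF W] mat_diag_mult_left[OF W])
qed (use W in \<open>auto simp: mat_diag_def\<close>)

lemma unitary_diagonalization_fun_eq:
  assumes U: "unitary_mat n U" and V: "unitary_mat n V"
    and eq: "U * mat_diag n f1 * mat_adjoint U = V * mat_diag n f2 * mat_adjoint V"
  shows "U * mat_diag n (\<lambda>i. g (f1 i)) * mat_adjoint U = V * mat_diag n (\<lambda>i. g (f2 i)) * mat_adjoint V"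
proof -
  note U = unitary_matD[OF U] and V = unitary_matD[OF V]
  define W where "W = mat_adjoint V * U"
  have W: "W \<in> carrier_mat n n"
    unfolding W_def using mult_carrier_mat[OF carrier_mat_adjoint[OF V(1)] U(1)] .
  note simps = assoc_mult_mat[of _ n n _ n _ n] mult_carrier_mat[of _ n n _ n]
    U V left_mult_one_mat[of _ n n] right_mult_one_mat[of _ n n]
  have cancel: "mat_adjoint U * (U * M) = M" "mat_adjoint V * (V * M) = M"
      "U * (mat_adjoint U * M) = M" "V * (mat_adjoint V * M) = M" if "M \<in> carrier_mat n n" for M
    using that U V by (simp_all flip: assoc_mult_mat[of _ n n _ n _ n])
  have "W * mat_diag n f1 = mat_adjoint V * (U * mat_diag n f1 * mat_adjoint U) * U"
    unfolding W_def using U V by (simp add: simps cancel)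
  also have "\<dots> = mat_diag n f2 * W"
    unfolding eq W_def using U V by (simp add: simps cancel)
  finally have "W * mat_diag n (\<lambda>i. g (f1 i)) = mat_diag n (\<lambda>i. g (f2 i)) * W"
    by (rule mat_diag_commute_fun[OF W])
  then have "V * (W * mat_diag n (\<lambda>i. g (f1 i))) * mat_adjoint U
      = V * (mat_diag n (\<lambda>i. g (f2 i)) * W) * mat_adjoint U"
    by simp
  then show ?thesis
    unfolding W_def using U V by (simp add: simps cancel)
qed

lemma quadratic_form_unitary_diag:
  assumes U: "(U :: complex mat) \<in> carrier_mat n n" and x: "x \<in> carrier_vec n"
  shows "conjugate x \<bullet> ((U * mat_diag n f * mat_adjoint U) *\<^sub>v x)
    = (\<Sum>k<n. f k * complex_of_real ((cmod ((mat_adjoint U *\<^sub>v x) $ k))\<^sup>2))"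
proof -
  define y where "y = mat_adjoint U *\<^sub>v x"
  have y: "y \<in> carrier_vec n"
    unfolding y_def using mult_mat_vec_carrier[OF carrier_mat_adjoint[OF U] x] .
  have "(U * mat_diag n f * mat_adjoint U) *\<^sub>v x = U *\<^sub>v (mat_diag n f *\<^sub>v y)"
    using U x y unfolding y_def by (simp add: assoc_mult_mat_vec[of _ n n _ n] mult_carrier_mat[of _ n n _ n])
  then have "conjugate x \<bullet> ((U * mat_diag n f * mat_adjoint U) *\<^sub>v x)
      = conjugate y \<bullet> (mat_diag n f *\<^sub>v y)"
    using sprod_mat_adjoint[OF carrier_mat_adjoint[OF U] x mult_mat_vec_carrier[OF mat_diag_dim y]]
    unfolding y_def by simp
  also have "\<dots> = (\<Sum>k<n. cnj (y $ k) * (f k * y $ k))"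
    using y by (simp add: scalar_prod_def atLeast0LessThan mat_diag_def row_def
        if_distrib[of "\<lambda>z. z * _"] sum.delta cong: if_cong)
  also have "\<dots> = (\<Sum>k<n. f k * complex_of_real ((cmod (y $ k))\<^sup>2))"
    by (intro sum.cong refl) (simp add: complex_mult_cnj cmod_power2 mult_ac)
  finally show ?thesis
    unfolding y_def .
qed

lemma quadratic_form_adjoint_mult_mult:
  assumes "(C :: complex mat) \<in> carrier_mat n n" "M \<in> carrier_mat n n" "x \<in> carrier_vec n"
  shows "conjugate x \<bullet> ((mat_adjoint C * M * C) *\<^sub>v x)
    = conjugate (C *\<^sub>v x) \<bullet> (M *\<^sub>v (C *\<^sub>v x))"
proof -
  have "(mat_adjoint C * M * C) *\<^sub>v x = mat_adjoint C *\<^sub>v (M *\<^sub>v (C *\<^sub>v x))"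
    using assms by (simp add: assoc_mult_mat_vec[of _ n n _ n] mult_carrier_mat[of _ n n _ n])
  then show ?thesis
    using assms sprod_mat_adjoint[of C n n x "M *\<^sub>v (C *\<^sub>v x)"] by simp
qed

lemma unitary_mat_norm:
  assumes U: "unitary_mat n U" and x: "x \<in> carrier_vec n"
  shows "conjugate x \<bullet> x = complex_of_real (\<Sum>k<n. (cmod ((mat_adjoint U *\<^sub>v x) $ k))\<^sup>2)"
proof -
  have "conjugate x \<bullet> x = conjugate x \<bullet> ((U * mat_diag n (\<lambda>_. 1) * mat_adjoint U) *\<^sub>v x)"
    using unitary_matD[OF U] x by simp
  also have "\<dots> = (\<Sum>k<n. 1 * complex_of_real ((cmod ((mat_adjoint U *\<^sub>v x) $ k))\<^sup>2))"
    by (rule quadratic_form_unitary_diag[OF unitary_matD(1)[OF U] x])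
  finally show ?thesis
    by simp
qed

lemma unitary_mat_adjoint_mult_vec_nonzero:
  assumes U: "unitary_mat n U" and x: "x \<in> carrier_vec n" "x \<noteq> 0\<^sub>v n"
  shows "mat_adjoint U *\<^sub>v x \<noteq> 0\<^sub>v n"
proof
  assume "mat_adjoint U *\<^sub>v x = 0\<^sub>v n"
  then have "(U * mat_adjoint U) *\<^sub>v x = 0\<^sub>v n"
    using unitary_matD(1)[OF U] x by (auto simp: assoc_mult_mat_vec[of _ n n _ n])
  then show False
    using unitary_matD(3)[OF U] x by simp
qed

lemma gl_mat_mult_vec_nonzero:
  assumes E: "gl_mat n E" and x: "x \<in> carrier_vec n" "x \<noteq> 0\<^sub>v n"
  shows "E *\<^sub>v x \<noteq> 0\<^sub>v n"
proof
  assume Ex: "E *\<^sub>v x = 0\<^sub>v n"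
  from E obtain F where E_carrier: "E \<in> carrier_mat n n" and F: "F * E = 1\<^sub>m n" "F \<in> carrier_mat n n"
    unfolding gl_mat_def invertible_mat_def inverts_mat_def
    by (metis carrier_matD carrier_matI index_mult_mat(2,3) index_one_mat(2,3))
  have "x = (F * E) *\<^sub>v x"
    using F x by simp
  also have "\<dots> = F *\<^sub>v (E *\<^sub>v x)"
    by (rule assoc_mult_mat_vec[OF F(2) E_carrier x(1)])
  also have "\<dots> = 0\<^sub>v n"
    using F(2) unfolding Ex by auto
  finally show False
    using x by simp
qed

lemma unitary_diagonalization_spectrum:
  assumes V: "unitary_mat n V" and Q: "Q = V * mat_diag n f * mat_adjoint V" and k: "k < n"
  shows "f k \<in> spectrum Q"
proof -
  note V = unitary_matD[OF V]
  define v where "v = V *\<^sub>v unit_vec n k"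
  have v: "v \<in> carrier_vec n" "mat_adjoint V *\<^sub>v v = unit_vec n k"
    unfolding v_def using V by (simp_all add: assoc_mult_mat_vec[of _ n n _ n, symmetric])
  have "v \<noteq> 0\<^sub>v n"
    using v(2) V(1) k by (auto dest: arg_cong[of _ _ "\<lambda>w. w $ k"])
  moreover have "mat_diag n f *\<^sub>v unit_vec n k = f k \<cdot>\<^sub>v unit_vec n k"
    using k by (intro eq_vecI) (auto simp: mat_diag_def scalar_prod_def unit_vec_def
        if_distrib[of "\<lambda>z. z * _"] sum.delta cong: if_cong)
  then have "Q *\<^sub>v v = f k \<cdot>\<^sub>v v"
    unfolding Q using V v by (simp add: assoc_mult_mat_vec[of _ n n _ n] v_def mult_mat_vec[of _ n n])
  ultimately show ?thesis
    unfolding spectrum_def eigenvalue_def eigenvector_def using Q V(1) v(1) by auto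
qed

lemma quadratic_form_le_lambda_max:
  assumes Q: "Q \<in> carrier_mat n n" "hermitian_mat Q" and x: "x \<in> carrier_vec n"
  shows "Re (conjugate x \<bullet> (Q *\<^sub>v x)) \<le> lambda_max Q * Re (conjugate x \<bullet> x)"
proof -
  obtain V e where V: "unitary_mat n V"
    and Q_eq: "Q = V * mat_diag n (\<lambda>i. complex_of_real (e i)) * mat_adjoint V"
    using hermitian_mat_unitary_diagonalization[OF Q] by blast
  have "e k \<le> lambda_max Q" if "k < n" for k
  proof -
    have "complex_of_real (e k) \<in> spectrum Q"
      using unitary_diagonalization_spectrum[OF V Q_eq that] .
    then show ?thesis
      unfolding lambda_max_def using card_finite_spectrum(1)[OF Q(1)]
      by (intro Max_ge) (auto intro!: image_eqI[where x="complex_of_real (e k)"])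
  qed
  then have "(\<Sum>k<n. e k * (cmod ((mat_adjoint V *\<^sub>v x) $ k))\<^sup>2)
      \<le> (\<Sum>k<n. lambda_max Q * (cmod ((mat_adjoint V *\<^sub>v x) $ k))\<^sup>2)"
    by (intro sum_mono mult_right_mono) auto
  then show ?thesis
    unfolding Q_eq quadratic_form_unitary_diag[OF unitary_matD(1)[OF V] x] unitary_mat_norm[OF V x]
    by (simp add: sum_distrib_left)
qed

lemma pd_mat_unitary_diagonalization:
  assumes X: "pd_mat n X"
  obtains U d where "unitary_mat n U" "\<And>i. i < n \<Longrightarrow> d i > 0"
    "X = U * mat_diag n (\<lambda>i. complex_of_real (d i)) * mat_adjoint U"
proof -
  obtain U d where U: "unitary_mat n U" and X_eq: "X = U * mat_diag n (\<lambda>i. complex_of_real (d i)) * mat_adjoint U"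
    using hermitian_mat_unitary_diagonalization X unfolding pd_mat_def by blast
  note U' = unitary_matD[OF U]
  have "d i > 0" if i: "i < n" for i
  proof -
    define x where "x = U *\<^sub>v unit_vec n i"
    have x: "x \<in> carrier_vec n" "mat_adjoint U *\<^sub>v x = unit_vec n i"
      unfolding x_def using U' by (simp_all add: assoc_mult_mat_vec[of _ n n _ n, symmetric])
    then have "x \<noteq> 0\<^sub>v n"
      using U'(1) i by (auto dest: arg_cong[of _ _ "\<lambda>w. w $ i"])
    then have "Re (conjugate x \<bullet> (X *\<^sub>v x)) > 0"
      using X x unfolding pd_mat_def by auto
    moreover have "conjugate x \<bullet> (X *\<^sub>v x) = (\<Sum>k<n. if k = i then complex_of_real (d i) else 0)"
      unfolding X_eq quadratic_form_unitary_diag[OF U'(1) x(1)] x(2)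
      by (intro sum.cong) (auto simp: unit_vec_def)
    ultimately show ?thesis
      using i by simp
  qed
  then show thesis
    using that U X_eq by blast
qed

lemma mat_powr_unitary_diag:
  assumes U: "unitary_mat n U" and d: "\<And>i. i < n \<Longrightarrow> d i > 0"
    and X: "X = U * mat_diag n (\<lambda>i. complex_of_real (d i)) * mat_adjoint U"
  shows "mat_powr n X r = U * mat_diag n (\<lambda>i. complex_of_real (d i powr r)) * mat_adjoint U"
proof -
  define P where "P Y \<longleftrightarrow> (\<exists>U d. unitary_mat n U \<and> (\<forall>i<n. d i > 0) \<and>
      X = U * mat_diag n (\<lambda>i. complex_of_real (d i)) * mat_adjoint U \<and>
      Y = U * mat_diag n (\<lambda>i. complex_of_real (d i powr r)) * mat_adjoint U)" for Y
  have "P (U * mat_diag n (\<lambda>i. complex_of_real (d i powr r)) * mat_adjoint U)"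
    unfolding P_def using U d X by blast
  then have "P (mat_powr n X r)"
    unfolding mat_powr_def P_def[symmetric] by (rule someI)
  then obtain U' d' where U': "unitary_mat n U'"
    and X': "X = U' * mat_diag n (\<lambda>i. complex_of_real (d' i)) * mat_adjoint U'"
    and powr: "mat_powr n X r = U' * mat_diag n (\<lambda>i. complex_of_real (d' i powr r)) * mat_adjoint U'"
    unfolding P_def by blast
  show ?thesis
    unfolding powr
    using unitary_diagonalization_fun_eq[OF U' U X'[symmetric, unfolded X], of "\<lambda>z. complex_of_real (Re z powr r)"]
    by simp
qed

lemma carrier_mat_powr:
  assumes "pd_mat n X"
  shows "mat_powr n X r \<in> carrier_mat n n"
proof -
  obtain U d where U: "unitary_mat n U" and d: "\<And>i. i < n \<Longrightarrow> d i > 0"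
    and X_eq: "X = U * mat_diag n (\<lambda>i. complex_of_real (d i)) * mat_adjoint U"
    using pd_mat_unitary_diagonalization[OF assms] by blast
  show ?thesis
    using mat_powr_unitary_diag[OF U d X_eq, of r] unitary_matD(1)[OF U]
    by (simp add: mult_carrier_mat[of _ n n _ n])
qed

lemma powr_neg_ge_tangent:
  fixes x q :: real
  assumes "x > 0" "q > 0"
  shows "x powr (-q) \<ge> 1 + q * (1 - x)"
proof -
  have "1 - q * ln x \<le> exp (-q * ln x)"
    using exp_ge_add_one_self[of "-q * ln x"] by simp
  moreover have "q * ln x \<le> q * (x - 1)"
    using assms ln_le_minus_one[of x] by (intro mult_left_mono) auto
  ultimately show ?thesis
    using assms by (simp add: powr_def algebra_simps)
qed

lemma weighted_mean_pos:
  fixes w mu :: "'i \<Rightarrow> real"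
  assumes "finite S" "\<And>i. i \<in> S \<Longrightarrow> w i \<ge> 0" "(\<Sum>i\<in>S. w i) = 1"
    and "\<And>i. i \<in> S \<Longrightarrow> mu i > 0"
  shows "(\<Sum>i\<in>S. w i * mu i) > 0"
proof -
  obtain j where j: "j \<in> S" "w j > 0"
    using assms(2,3) by (metis less_eq_real_def sum.neutral zero_neq_one)
  have "w j * mu j \<le> (\<Sum>i\<in>S. w i * mu i)"
    using assms j by (intro member_le_sum) (auto intro: mult_nonneg_nonneg less_imp_le)
  moreover have "w j * mu j > 0"
    using j assms(4) by auto
  ultimately show ?thesis
    by linarith
qed

text \<open>Jensen's inequality for the convex function \<open>x \<mapsto> x powr (-q)\<close>, obtained from its
  tangent line at the weighted mean.\<close>

lemma weighted_mean_powr_neg_le: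
  fixes w mu :: "'i \<Rightarrow> real"
  assumes S: "finite S" and w: "\<And>i. i \<in> S \<Longrightarrow> w i \<ge> 0" "(\<Sum>i\<in>S. w i) = 1"
    and mu: "\<And>i. i \<in> S \<Longrightarrow> mu i > 0" and q: "q > 0"
  shows "(\<Sum>i\<in>S. w i * mu i) powr (-q) \<le> (\<Sum>i\<in>S. w i * mu i powr (-q))"
proof -
  define a where "a = (\<Sum>i\<in>S. w i * mu i)"
  have a: "a > 0"
    unfolding a_def using weighted_mean_pos[OF S w mu] .
  have "a powr (-q) = a powr (-q) * ((1 + q) * (\<Sum>i\<in>S. w i) - q / a * (\<Sum>i\<in>S. w i * mu i))"
    using a w(2) unfolding a_def[symmetric] by simp
  also have "\<dots> = (\<Sum>i\<in>S. w i * (a powr (-q) * (1 + q * (1 - mu i / a))))"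
    by (simp add: sum_distrib_left sum_subtractf algebra_simps sum_distrib_right)
  also have "\<dots> \<le> (\<Sum>i\<in>S. w i * mu i powr (-q))"
  proof (rule sum_mono)
    fix i assume i: "i \<in> S"
    have "a powr (-q) * (1 + q * (1 - mu i / a)) \<le> a powr (-q) * (mu i / a) powr (-q)"
      using powr_neg_ge_tangent[of "mu i / a" q] a mu[OF i] q by (intro mult_left_mono) auto
    also have "\<dots> = mu i powr (-q)"
      using a mu[OF i] by (simp add: powr_divide powr_minus field_simps)
    finally show "w i * (a powr (-q) * (1 + q * (1 - mu i / a))) \<le> w i * mu i powr (-q)"
      using w(1)[OF i] by (intro mult_left_mono) auto
  qed
  finally show ?thesis
    unfolding a_def .
qed

lemma one_minus_mult_powr_le:
  fixes a q :: real
  assumes a: "0 < a" "a < 1" and q: "q > 0"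
  shows "(1 - a) * a powr q \<le> q powr q / (q + 1) powr (q + 1)"
proof -
  have "ln (1 - a) \<le> (q + 1) * (1 - a) - 1 - ln (q + 1)"
    using ln_le_minus_one[of "(q + 1) * (1 - a)"] a q by (simp add: ln_mult)
  moreover have "q * (ln (q + 1) + ln a - ln q) \<le> q * ((q + 1) * a / q - 1)"
    using ln_le_minus_one[of "(q + 1) * a / q"] a q by (intro mult_left_mono) (simp_all add: ln_mult ln_div)
  moreover have "q * ((q + 1) * a / q - 1) = (q + 1) * a - q"
    using q by (simp add: field_simps)
  ultimately have "ln (1 - a) + q * ln a \<le> q * ln q - (q + 1) * ln (q + 1)"
    by (simp add: algebra_simps)
  then have "ln ((1 - a) * a powr q) \<le> ln (q powr q / (q + 1) powr (q + 1))"
    using a q by (simp add: ln_mult ln_powr ln_div)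
  then show ?thesis
    using a q by simp
qed

lemma powr_moment_bound:
  fixes d y :: "nat \<Rightarrow> real" and s t q L :: real
  assumes d: "\<And>k. k < n \<Longrightarrow> d k > 0" and y: "\<And>k. k < n \<Longrightarrow> y k \<ge> 0" "(\<Sum>k<n. y k) > 0"
    and s: "s > 0" and q: "0 < q" "q \<le> t / s" and L: "L \<ge> 0"
    and less: "(\<Sum>k<n. d k powr s * y k) + L * (\<Sum>k<n. d k powr (-t) * y k) < (\<Sum>k<n. y k)"
  shows "L < q powr q / (q + 1) powr (q + 1)"
proof -
  define N where "N = (\<Sum>k<n. y k)"
  define w where "w k = y k / N" for k
  define a where "a = (\<Sum>k<n. w k * d k powr s)"
  have w: "\<And>k. k \<in> {..<n} \<Longrightarrow> w k \<ge> 0" "(\<Sum>k<n. w k) = 1"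
    unfolding w_def N_def using y by (auto simp flip: sum_divide_distrib)
  have mu: "\<And>k. k \<in> {..<n} \<Longrightarrow> d k powr s > 0"
    using d by fastforce
  have t: "t / s > 0"
    using q by linarith
  have a0: "a > 0"
    unfolding a_def using weighted_mean_pos[OF _ w mu] by simp
  have "a + L * a powr (-(t / s)) \<le> a + L * (\<Sum>k<n. w k * (d k powr s) powr (-(t / s)))"
    unfolding a_def using weighted_mean_powr_neg_le[OF _ w mu t] L by (simp add: mult_left_mono)
  also have "\<dots> = ((\<Sum>k<n. d k powr s * y k) + L * (\<Sum>k<n. d k powr (-t) * y k)) / N"
    using d s unfolding a_def w_def
    by (simp add: powr_powr sum_divide_distrib add_divide_distrib sum_distrib_left algebra_simps)
  also have "\<dots> < 1"
    using less y(2) unfolding N_def by simp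
  finally have lt: "L * a powr (-(t / s)) < 1 - a"
    by simp
  moreover have "L * a powr (-(t / s)) \<ge> 0"
    using L by simp
  ultimately have a1: "a < 1"
    by linarith
  have "L = L * a powr (-(t / s)) * a powr (t / s)"
    using a0 by (simp add: powr_minus field_simps)
  also have "\<dots> < (1 - a) * a powr (t / s)"
    using lt a0 by (intro mult_strict_right_mono) auto
  also have "\<dots> \<le> (1 - a) * a powr q"
    using q a0 a1 by (intro mult_left_mono powr_mono') auto
  also have "\<dots> \<le> q powr q / (q + 1) powr (q + 1)"
    using one_minus_mult_powr_le[OF a0 a1 q(1)] .
  finally show ?thesis .
qed

lemma add_mat_right_commute:
  assumes "(A :: 'a :: comm_monoid_add mat) \<in> carrier_mat n m" "B \<in> carrier_mat n m" "C \<in> carrier_mat n m"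
  shows "A + B + C = A + C + B"
  using assms by (simp add: assoc_add_mat comm_add_mat[of B n m C])

lemma quadratic_form_add:
  assumes "(A :: complex mat) \<in> carrier_mat n n" "B \<in> carrier_mat n n" "x \<in> carrier_vec n"
  shows "conjugate x \<bullet> ((A + B) *\<^sub>v x)
    = conjugate x \<bullet> (A *\<^sub>v x) + conjugate x \<bullet> (B *\<^sub>v x)"
  using assms by (simp add: add_mult_distrib_mat_vec[of _ n n] scalar_prod_add_distrib[of _ n])

lemma sum_mult_cmod_power2_pos:
  assumes "(z :: complex vec) \<in> carrier_vec n" "z \<noteq> 0\<^sub>v n" "\<And>k. k < n \<Longrightarrow> f k > 0"
  shows "(\<Sum>k<n. f k * (cmod (z $ k))\<^sup>2) > 0"
proof -
  obtain j where j: "j < n" "z $ j \<noteq> 0"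
    using assms(1,2) by (metis carrier_vecD eq_vecI index_zero_vec)
  have "0 \<le> f k * (cmod (z $ k))\<^sup>2" if "k < n" for k
    using assms(3)[OF that] by simp
  then have "f j * (cmod (z $ j))\<^sup>2 \<le> (\<Sum>k<n. f k * (cmod (z $ k))\<^sup>2)"
    using j by (intro member_le_sum) auto
  moreover have "f j * (cmod (z $ j))\<^sup>2 > 0"
    using j assms(3) by simp
  ultimately show ?thesis
    by linarith
qed

lemma quadratic_form_adjoint_mult_mult_eigenvector:
  assumes C: "(C :: complex mat) \<in> carrier_mat n n" and M: "M \<in> carrier_mat n n"
    and x: "x \<in> carrier_vec n" "C *\<^sub>v x = lam \<cdot>\<^sub>v x"
  shows "conjugate x \<bullet> ((mat_adjoint C * M * C) *\<^sub>v x)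
    = complex_of_real ((cmod lam)\<^sup>2) * (conjugate x \<bullet> (M *\<^sub>v x))"
proof -
  have "conjugate x \<bullet> ((mat_adjoint C * M * C) *\<^sub>v x) = conjugate (lam \<cdot>\<^sub>v x) \<bullet> (M *\<^sub>v (lam \<cdot>\<^sub>v x))"
    using quadratic_form_adjoint_mult_mult[OF C M x(1)] x(2) by simp
  also have "\<dots> = (cnj lam * lam) * (conjugate x \<bullet> (M *\<^sub>v x))"
    using x(1) M
    by (simp add: conjugate_smult_vec mult_mat_vec[of _ n n] scalar_prod_smult_distrib[of _ n]
        smult_scalar_prod_distrib[of _ n])
  also have "cnj lam * lam = complex_of_real ((cmod lam)\<^sup>2)"
    by (metis complex_norm_square mult.commute)
  finally show ?thesis .
qed

lemma quadratic_form_mat_powr_pos: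
  assumes X: "pd_mat n X" and z: "z \<in> carrier_vec n" "z \<noteq> 0\<^sub>v n"
  shows "Re (conjugate z \<bullet> (mat_powr n X r *\<^sub>v z)) > 0"
proof -
  obtain U d where U: "unitary_mat n U" and d: "\<And>i. i < n \<Longrightarrow> d i > 0"
    and X_eq: "X = U * mat_diag n (\<lambda>i. complex_of_real (d i)) * mat_adjoint U"
    using pd_mat_unitary_diagonalization[OF X] by blast
  have "(\<Sum>k<n. d k powr r * (cmod ((mat_adjoint U *\<^sub>v z) $ k))\<^sup>2) > 0"
  proof (rule sum_mult_cmod_power2_pos)
    show "mat_adjoint U *\<^sub>v z \<in> carrier_vec n"
      using mult_mat_vec_carrier[OF carrier_mat_adjoint[OF unitary_matD(1)[OF U]] z(1)] .
    show "mat_adjoint U *\<^sub>v z \<noteq> 0\<^sub>v n"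
      by (rule unitary_mat_adjoint_mult_vec_nonzero[OF U z])
    show "d k powr r > 0" if "k < n" for k
      using d[OF that] by simp
  qed
  moreover have "conjugate z \<bullet> (mat_powr n X r *\<^sub>v z)
      = (\<Sum>k<n. complex_of_real (d k powr r) * complex_of_real ((cmod ((mat_adjoint U *\<^sub>v z) $ k))\<^sup>2))"
    using mat_powr_unitary_diag[OF U d X_eq, of r] quadratic_form_unitary_diag[OF unitary_matD(1)[OF U] z(1)]
    by simp
  ultimately show ?thesis
    by (simp add: of_real_sum[symmetric])
qed

lemma spectral_radius_sq_less_of_equation:
  fixes s t p q :: real and X C E Q :: "complex mat"
  assumes n: "n > 0" and s: "s > 0" and q: "0 < q" "q \<le> t / s"
    and X: "pd_mat n X" and C: "C \<in> carrier_mat n n" and E: "gl_mat n E"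
    and Q: "Q \<in> carrier_mat n n" "hermitian_mat Q" "lambda_max Q \<le> 1"
    and eq: "mat_powr n X s + mat_adjoint C * mat_powr n X (- t) * C
      + mat_adjoint E * mat_powr n X (- p) * E = Q"
  shows "(spectral_radius C)\<^sup>2 < q powr q / (q + 1) powr (q + 1)"
proof -
  obtain U d where U: "unitary_mat n U" and d: "\<And>i. i < n \<Longrightarrow> d i > 0"
    and X_eq: "X = U * mat_diag n (\<lambda>i. complex_of_real (d i)) * mat_adjoint U"
    using pd_mat_unitary_diagonalization[OF X] by blast
  note U' = unitary_matD[OF U]
  let ?P = "mat_powr n X"
  have P: "?P r = U * mat_diag n (\<lambda>i. complex_of_real (d i powr r)) * mat_adjoint U" for r
    using mat_powr_unitary_diag[OF U d X_eq] .
  note P_carrier = carrier_mat_powr[OF X]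
  have P_form: "conjugate z \<bullet> (?P r *\<^sub>v z)
      = complex_of_real (\<Sum>k<n. d k powr r * (cmod ((mat_adjoint U *\<^sub>v z) $ k))\<^sup>2)"
    if "z \<in> carrier_vec n" for z r
    unfolding P quadratic_form_unitary_diag[OF U'(1) that] by (simp add: of_real_sum)
  have E_carrier: "E \<in> carrier_mat n n"
    using E unfolding gl_mat_def by simp
  obtain lam where lam: "spectral_radius C = cmod lam" "lam \<in> spectrum C"
    using spectral_radius_mem_max(1)[OF C n] by auto
  then obtain x where x: "x \<in> carrier_vec n" "x \<noteq> 0\<^sub>v n" "C *\<^sub>v x = lam \<cdot>\<^sub>v x"
    using C unfolding spectrum_def eigenvalue_def eigenvector_def by auto
  define y where "y k = (cmod ((mat_adjoint U *\<^sub>v x) $ k))\<^sup>2" for k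
  have y_sum: "(\<Sum>k<n. y k) = Re (conjugate x \<bullet> x)"
    unfolding y_def unitary_mat_norm[OF U x(1)] by simp
  have "x \<bullet>c x > 0"
    using x by simp
  then have y_pos: "(\<Sum>k<n. y k) > 0"
    unfolding y_sum using comm_scalar_prod[of x n "conjugate x"] x(1) by (simp add: less_complex_def)
  have form_s: "Re (conjugate x \<bullet> (?P s *\<^sub>v x)) = (\<Sum>k<n. d k powr s * y k)"
    using P_form[OF x(1)] unfolding y_def by simp
  have form_t: "Re (conjugate x \<bullet> ((mat_adjoint C * ?P (-t) * C) *\<^sub>v x))
      = (cmod lam)\<^sup>2 * (\<Sum>k<n. d k powr (-t) * y k)"
    unfolding quadratic_form_adjoint_mult_mult_eigenvector[OF C P_carrier x(1,3)] P_form[OF x(1)] y_def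
    by simp
  have "E *\<^sub>v x \<in> carrier_vec n" "E *\<^sub>v x \<noteq> 0\<^sub>v n"
    using E_carrier x gl_mat_mult_vec_nonzero[OF E] by auto
  then have form_p: "Re (conjugate x \<bullet> ((mat_adjoint E * ?P (-p) * E) *\<^sub>v x)) > 0"
    unfolding quadratic_form_adjoint_mult_mult[OF E_carrier P_carrier x(1)]
    by (rule quadratic_form_mat_powr_pos[OF X])
  have form_Q: "Re (conjugate x \<bullet> (Q *\<^sub>v x)) \<le> Re (conjugate x \<bullet> x)"
    using quadratic_form_le_lambda_max[OF Q(1,2) x(1)] mult_right_mono[OF Q(3), of "Re (conjugate x \<bullet> x)"]
      y_sum y_pos by linarith
  have "conjugate x \<bullet> (Q *\<^sub>v x) = conjugate x \<bullet> (?P s *\<^sub>v x)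
      + conjugate x \<bullet> ((mat_adjoint C * ?P (-t) * C) *\<^sub>v x)
      + conjugate x \<bullet> ((mat_adjoint E * ?P (-p) * E) *\<^sub>v x)"
    unfolding eq[symmetric] using C E_carrier P_carrier x(1)
    by (simp add: quadratic_form_add[of _ n] mult_carrier_mat[of _ n n _ n] add_carrier_mat)
  then have "(\<Sum>k<n. d k powr s * y k) + (cmod lam)\<^sup>2 * (\<Sum>k<n. d k powr (-t) * y k) < (\<Sum>k<n. y k)"
    using form_s form_t form_p form_Q y_sum by simp
  from powr_moment_bound[OF d _ y_pos s q _ this] show ?thesis
    unfolding lam(1) by (simp add: y_def)
qed

theorem mainTheorem2:
  fixes n :: nat and s t p :: real and A B Q :: "complex mat"
  assumes "n > 0"
    and "s \<ge> 1" and "t \<ge> 1" and "p \<ge> 1"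
    and "gl_mat n A" and "gl_mat n B"
    and "pd_mat n Q" and "lambda_max Q \<le> 1"
    and "\<exists>X. pd_mat n X \<and>
           mat_powr n X s + mat_adjoint A * mat_powr n X (- t) * A
             + mat_adjoint B * mat_powr n X (- p) * B = Q"
  shows "(spectral_radius A)\<^sup>2 < min (t / s) (p / s) powr min (t / s) (p / s)
           / (min (t / s) (p / s) + 1) powr (min (t / s) (p / s) + 1)
       \<and> (spectral_radius B)\<^sup>2 < min (t / s) (p / s) powr min (t / s) (p / s)
           / (min (t / s) (p / s) + 1) powr (min (t / s) (p / s) + 1)"
proof -
  obtain X where X: "pd_mat n X"
    and eq: "mat_powr n X s + mat_adjoint A * mat_powr n X (- t) * A
      + mat_adjoint B * mat_powr n X (- p) * B = Q"
    using assms(9) by blast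
  define q where "q = min (t / s) (p / s)"
  have s: "s > 0" and q: "q > 0" "q \<le> t / s" "q \<le> p / s"
    unfolding q_def using assms(2-4) by auto
  have Q: "Q \<in> carrier_mat n n" "hermitian_mat Q"
    using assms(7) unfolding pd_mat_def by auto
  have A: "A \<in> carrier_mat n n" and B: "B \<in> carrier_mat n n"
    using assms(5,6) unfolding gl_mat_def by auto
  have "mat_powr n X s + mat_adjoint B * mat_powr n X (- p) * B
      + mat_adjoint A * mat_powr n X (- t) * A = Q"
    unfolding eq[symmetric] using A B carrier_mat_powr[OF X]
    by (intro add_mat_right_commute[of _ n n]) (auto simp: mult_carrier_mat[of _ n n _ n])
  then show ?thesis
    using spectral_radius_sq_less_of_equation[OF assms(1) s q(1,2) X A assms(6) Q assms(8) eq]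
      spectral_radius_sq_less_of_equation[OF assms(1) s q(1,3) X B assms(5) Q assms(8)]
    unfolding q_def by simp
qed

end
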